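(* Consider the parametric multistage setting of the context, let $\mu>0$, and assume: (A1) the noises $\mathbf{W}_1,\dots,\mathbf{W}_T$ are independent and each has finite support; (A2) (i) $\Phi(p)<+\infty$ for some $p\in\mathcal{P}_{\mathrm{ad}}$; (ii) each $f_t$ is affine in $(x,u)$; (iii) for all $t$ and all $w\in\mathrm{Supp}(\mathbf{W}_{t+1})$, $L_t(\cdot,\cdot,w,\cdot)\in\Gamma_{\mathcal{K}}[\mathbb{X}\times\mathbb{U},\mathbb{P}]$; (iv) $K\in\Gamma[\mathbb{X},\mathbb{P}]$; (A4) there is a compact $\mathcal{P}\subset\mathbb{P}$ with $\mathrm{dom}\,L_t(x,u,w,\cdot)\subset\mathcal{P}$ for all $(x,u)$, all $t$ and all $w\in\mathrm{Supp}(\mathbf{W}_{t+1})$, and $\mathrm{dom}\,K(x,\cdot)\subset\mathcal{P}$ for all $x$. Then: 1. $\widetilde{V}^\mu_t\le V_t$ for all $t\in\{0,\dots,T\}$; 2. the functions $\widetilde{V}^\mu_0,\dots,\widetilde{V}^\mu_T$ are proper and belong to $\Theta[\mathbb{X},\mathbb{P}]$, and their gradients in $p$ are given by the backward induction $\nabla_p\widetilde{V}^\mu_T(x,p)=\nabla_pK^\mu(x,p)$ and, for $t\in\{0,\dots,T-1\}$, $$\nabla_p\widetilde{V}^\mu_t(x,p)=\mathbb{E}\big[\nabla_pL^\mu_t(x,u^\star,\mathbf{W}_{t+1},p)+\nabla_p\widetilde{V}^\mu_{t+1}\big(f_t(x,u^\star,\mathbf{W}_{t+1}),p\big)\big]$$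 for any $u^\star$ in the nonempty set $\arg\min_{u\in\mathbb{U}}\mathbb{E}\big[L^\mu_t(x,u,\mathbf{W}_{t+1},p)+\widetilde{V}^\mu_{t+1}(f_t(x,u,\mathbf{W}_{t+1}),p)\big]$, where $(x,p)$ ranges over the effective domain of $\widetilde{V}^\mu_t$.
   Context: Setting: $T\ge1$; $\mathbb{X}=\mathbb{R}^{n_x}$, $\mathbb{U}=\mathbb{R}^{n_u}$, $\mathbb{W}=\mathbb{R}^{n_w}$, $\mathbb{P}=\mathbb{R}^{n_p}$; $\mathbf{W}_1,\dots,\mathbf{W}_T$ are $\mathbb{W}$-valued random variables, $\mathrm{Supp}$ = set of values taken with positive probability; dynamics $f_t:\mathbb{X}\times\mathbb{U}\times\mathbb{W}\to\mathbb{X}$, stage costs $L_t:\mathbb{X}\times\mathbb{U}\times\mathbb{W}\times\mathbb{P}\to\,]-\infty,+\infty]$ ($t=0,\dots,T-1$), final cost $K:\mathbb{X}\times\mathbb{P}\to\,]-\infty,+\infty]$, initial state $x_0$, admissible parameter set $\mathcal{P}_{\mathrm{ad}}\subseteq\mathbb{P}$. $\Phi(p)=\inf\mathbb{E}[\sum_{t=0}^{T-1}L_t(\mathbf{X}_t,\mathbf{U}_t,\mathbf{W}_{t+1},p)+K(\mathbf{X}_T,p)]$ over controls $\mathbf{U}_t$ measurable w.r.t. $\sigma(\mathbf{W}_1,\dots,\mathbf{W}_t)$, with $\mathbf{X}_0=x_0$, $\mathbf{X}_{t+1}=f_t(\mathbf{X}_t,\mathbf{U}_t,\mathbf{W}_{t+1})$.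 Value functions: $V_T=K$, $V_t(x,p)=\inf_{u\in\mathbb{U}}\mathbb{E}[L_t(x,u,\mathbf{W}_{t+1},p)+V_{t+1}(f_t(x,u,\mathbf{W}_{t+1}),p)]$. Moreau envelopes: $L^\mu_t(x,u,w,p)=\inf_{p'\in\mathbb{P}}(L_t(x,u,w,p')+\frac{1}{2\mu}\|p-p'\|_2^2)$, $K^\mu(x,p)=\inf_{p'\in\mathbb{P}}(K(x,p')+\frac{1}{2\mu}\|p-p'\|_2^2)$. Lower smooth value functions: $\widetilde{V}^\mu_T=K^\mu$ and $\widetilde{V}^\mu_t(x,p)=\inf_{u\in\mathbb{U}}\mathbb{E}[L^\mu_t(x,u,\mathbf{W}_{t+1},p)+\widetilde{V}^\mu_{t+1}(f_t(x,u,\mathbf{W}_{t+1}),p)]$. Proper: never $-\infty$ and nonempty effective domain $\mathrm{dom}\,g=\{g<+\infty\}$. Function classes: $\Gamma[\mathbb{Y},\mathbb{P}]$ = lsc convex functions $\mathbb{Y}\times\mathbb{P}\to\,]-\infty,+\infty]$; $\Theta[\mathbb{Y},\mathcal{Q}]$ ($\mathcal{Q}\subset\mathbb{P}$) = those $\theta\in\Gamma[\mathbb{Y},\mathbb{P}]$ with $\mathrm{dom}\,\theta=Y_\theta\times\mathcal{Q}$ for some (possibly empty) $Y_\theta$ and $\theta(y,\cdot)$ differentiable on $\mathrm{int}\,\mathcal{Q}$ for $y\in Y_\theta$; $\Gamma_{\mathcal{K}}[\mathbb{X}\times\mathbb{U},\mathbb{P}]$ = those $\gamma\in\Gamma[\mathbb{X}\times\mathbb{U},\mathbb{P}]$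 with $\mathrm{dom}\,\gamma(x,\cdot,p)\subset\mathcal{K}_\gamma$ for all $(x,p)$, for some compact $\mathcal{K}_\gamma\subset\mathbb{U}$. *)

theory Defs
  imports "HOL-Analysis.Analysis" "HOL-Probability.Probability"
begin

definition ereal_lsc :: "('a::topological_space \<Rightarrow> ereal) \<Rightarrow> bool" where
  "ereal_lsc g \<longleftrightarrow> (\<forall>c::real. closed {z. g z \<le> ereal c})"

definition ereal_convex :: "('a::real_vector \<Rightarrow> ereal) \<Rightarrow> bool" where
  "ereal_convex g \<longleftrightarrow> (\<forall>z1 z2. \<forall>t::real. 0 < t \<and> t < 1 \<longrightarrow>
      g ((1 - t) *\<^sub>R z1 + t *\<^sub>R z2) \<le> ereal (1 - t) * g z1 + ereal t * g z2)"

definition edom2 :: "('y \<Rightarrow> 'p \<Rightarrow> ereal) \<Rightarrow> ('y \<times> 'p) set" where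
  "edom2 g = {(y, p). g y p < \<infinity>}"

definition proper2 :: "('y \<Rightarrow> 'p \<Rightarrow> ereal) \<Rightarrow> bool" where
  "proper2 g \<longleftrightarrow> (\<forall>y p. g y p \<noteq> -\<infinity>) \<and> edom2 g \<noteq> {}"

definition Gamma_cl :: "('y::real_normed_vector \<Rightarrow> 'p::real_normed_vector \<Rightarrow> ereal) \<Rightarrow> bool" where
  "Gamma_cl g \<longleftrightarrow> (\<forall>y p. g y p \<noteq> -\<infinity>) \<and>
     ereal_lsc (\<lambda>(y, p). g y p) \<and> ereal_convex (\<lambda>(y, p). g y p)"

definition Theta_cl :: "'p::euclidean_space set \<Rightarrow> ('y::real_normed_vector \<Rightarrow> 'p \<Rightarrow> ereal) \<Rightarrow> bool" where
  "Theta_cl Q g \<longleftrightarrow> Gamma_cl g \<and>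
     (\<exists>Y. edom2 g = Y \<times> Q \<and>
        (\<forall>y\<in>Y. \<forall>p\<in>interior Q. (\<lambda>p'. real_of_ereal (g y p')) differentiable (at p)))"

definition GammaK_cl :: "('x::real_normed_vector \<Rightarrow> 'u::real_normed_vector \<Rightarrow> 'p::real_normed_vector \<Rightarrow> ereal) \<Rightarrow> bool" where
  "GammaK_cl g \<longleftrightarrow> Gamma_cl (\<lambda>(x, u) p. g x u p) \<and>
     (\<exists>KK. compact KK \<and> (\<forall>x p. {u. g x u p < \<infinity>} \<subseteq> KK))"

definition grad :: "('a::real_inner \<Rightarrow> real) \<Rightarrow> 'a \<Rightarrow> 'a" where
  "grad g p = (THE D. GDERIV g p :> D)"

definition moreau :: "real \<Rightarrow> ('p::real_normed_vector \<Rightarrow> ereal) \<Rightarrow> 'p \<Rightarrow> ereal" where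
  "moreau \<mu> g p = (INF p'. g p' + ereal ((norm (p - p'))\<^sup>2 / (2 * \<mu>)))"

definition Lmu :: "real \<Rightarrow> (nat \<Rightarrow> 'x \<Rightarrow> 'u \<Rightarrow> 'w \<Rightarrow> 'p::real_normed_vector \<Rightarrow> ereal)
    \<Rightarrow> nat \<Rightarrow> 'x \<Rightarrow> 'u \<Rightarrow> 'w \<Rightarrow> 'p \<Rightarrow> ereal" where
  "Lmu \<mu> L t x u w = moreau \<mu> (L t x u w)"

definition Kmu :: "real \<Rightarrow> ('x \<Rightarrow> 'p::real_normed_vector \<Rightarrow> ereal) \<Rightarrow> 'x \<Rightarrow> 'p \<Rightarrow> ereal" where
  "Kmu \<mu> K x = moreau \<mu> (K x)"

definition Supp :: "'a measure \<Rightarrow> ('a \<Rightarrow> 'w) \<Rightarrow> 'w set" where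
  "Supp M X = {w. 0 < measure M (X -` {w} \<inter> space M)}"

definition finite_support :: "'a measure \<Rightarrow> ('a \<Rightarrow> 'w) \<Rightarrow> bool" where
  "finite_support M X \<longleftrightarrow> finite (Supp M X) \<and> (AE \<omega> in M. X \<omega> \<in> Supp M X)"

definition Eexp :: "'a measure \<Rightarrow> ('a \<Rightarrow> 'w) \<Rightarrow> ('w \<Rightarrow> ereal) \<Rightarrow> ereal" where
  "Eexp M X g = (\<Sum>w\<in>Supp M X. ereal (measure M (X -` {w} \<inter> space M)) * g w)"

definition Evec :: "'a measure \<Rightarrow> ('a \<Rightarrow> 'w) \<Rightarrow> ('w \<Rightarrow> 'v::real_vector) \<Rightarrow> 'v" where
  "Evec M X g = (\<Sum>w\<in>Supp M X. measure M (X -` {w} \<inter> space M) *\<^sub>R g w)"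

text \<open>Backward recursion, indexed by the number k of remaining stages:
  dp ... T k is the value function at time T - k.\<close>
primrec dp :: "'a measure \<Rightarrow> (nat \<Rightarrow> 'a \<Rightarrow> 'w) \<Rightarrow> (nat \<Rightarrow> 'x \<Rightarrow> 'u \<Rightarrow> 'w \<Rightarrow> 'x)
    \<Rightarrow> (nat \<Rightarrow> 'x \<Rightarrow> 'u \<Rightarrow> 'w \<Rightarrow> 'p \<Rightarrow> ereal) \<Rightarrow> ('x \<Rightarrow> 'p \<Rightarrow> ereal) \<Rightarrow> nat \<Rightarrow> nat
    \<Rightarrow> 'x \<Rightarrow> 'p \<Rightarrow> ereal" where
  "dp M W f L K T 0 = K"
| "dp M W f L K T (Suc k) = (\<lambda>x p. INF u. Eexp M (W (T - Suc k + 1))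
      (\<lambda>w. L (T - Suc k) x u w p + dp M W f L K T k (f (T - Suc k) x u w) p))"

definition Vfun where
  "Vfun M W f L K T t = dp M W f L K T (T - t)"

definition Vmu where
  "Vmu \<mu> M W f L K T t = dp M W f (Lmu \<mu> L) (Kmu \<mu> K) T (T - t)"

text \<open>Policies: by Doob-Dynkin, a control U_t measurable w.r.t. \<sigma>(W_1..W_t) is
  U_t = \<pi>_t(W_1,..,W_t). A policy \<pi> t ws may depend only on ws 1,...,ws t.\<close>
definition nonanticipative :: "nat \<Rightarrow> (nat \<Rightarrow> (nat \<Rightarrow> 'w) \<Rightarrow> 'u) \<Rightarrow> bool" where
  "nonanticipative T \<pi> \<longleftrightarrow> (\<forall>t<T. \<forall>ws ws'. (\<forall>i\<in>{1..t}. ws i = ws' i) \<longrightarrow> \<pi> t ws = \<pi> t ws')"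

primrec traj :: "(nat \<Rightarrow> 'x \<Rightarrow> 'u \<Rightarrow> 'w \<Rightarrow> 'x) \<Rightarrow> 'x \<Rightarrow> (nat \<Rightarrow> (nat \<Rightarrow> 'w) \<Rightarrow> 'u)
    \<Rightarrow> (nat \<Rightarrow> 'w) \<Rightarrow> nat \<Rightarrow> 'x" where
  "traj f x0 \<pi> ws 0 = x0"
| "traj f x0 \<pi> ws (Suc t) = f t (traj f x0 \<pi> ws t) (\<pi> t ws) (ws (Suc t))"

definition path_cost where
  "path_cost f L K T x0 \<pi> ws p =
     (\<Sum>t<T. L t (traj f x0 \<pi> ws t) (\<pi> t ws) (ws (Suc t)) p) + K (traj f x0 \<pi> ws T) p"

text \<open>Expected cost: the joint law of (W_1,...,W_T) is concentrated on the finite set of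
  tuples of support points.\<close>
definition Phi where
  "Phi M W f L K T x0 p = (INF \<pi>\<in>{\<pi>. nonanticipative T \<pi>}.
     \<Sum>ws\<in>(\<Pi>\<^sub>E i\<in>{1..T}. Supp M (W i)).
        ereal (measure M {\<omega>\<in>space M. \<forall>i\<in>{1..T}. W i \<omega> = ws i}) * path_cost f L K T x0 \<pi> ws p)"

end

theory Submission
  imports Defs
begin

text \<open>
  Each smoothed value function arises from the next one by a partial minimization,
  \<open>V\<^sub>t(x, p) = inf\<^sub>u Q\<^sub>t(x, u, p)\<close>, where \<open>Q\<^sub>t\<close> is the finite expectation of the Moreau-smoothed
  stage cost plus \<open>V\<^sub>t\<^sub>+\<^sub>1\<close> composed with the affine dynamics. The class of jointly lower
  semicontinuous convex functions whose effective domain in \<open>p\<close> is all or nothing and which are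
  differentiable in \<open>p\<close> there contains the Moreau envelopes of data with compact \<open>p\<close>-domains,
  is stable under positive combinations and affine changes of variables, and is stable under
  minimization over \<open>u\<close> when the \<open>u\<close>-domain is compact, because the infimum is then attained.
  At a minimizer \<open>u\<^sup>*\<close> the convex function \<open>V\<^sub>t(x, \<cdot>)\<close> lies below the differentiable function
  \<open>Q\<^sub>t(x, u\<^sup>*, \<cdot>)\<close> and touches it at \<open>p\<close>, so it has the same gradient there; this is the
  gradient recursion. Moreau envelopes minorize, so \<open>V\<^sub>t\<close> lies below the unsmoothed value function,
  which is finite along the trajectories of a policy of finite expected cost: by independence every
  scenario of support points has positive probability, hence finite cost.
\<close>

lemma grad_eqI:
  fixes g :: "'p::real_inner \<Rightarrow> real"
  assumes "GDERIV g p :> D"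
  shows "grad g p = D"
  unfolding grad_def
proof (rule the_equality)
  show "GDERIV g p :> D" by (rule assms)
next
  fix D' assume "GDERIV g p :> D'"
  then have "(\<lambda>h. h \<bullet> D') = (\<lambda>h. h \<bullet> D)"
    using assms unfolding gderiv_def by (rule has_derivative_unique)
  then have "(D' - D) \<bullet> D' = (D' - D) \<bullet> D" by metis
  then have "(D' - D) \<bullet> (D' - D) = 0" by (simp add: inner_diff_right)
  then show "D' = D" by simp
qed

lemma GDERIV_grad:
  fixes g :: "'p::euclidean_space \<Rightarrow> real"
  assumes "g differentiable (at p)"
  shows "GDERIV g p :> grad g p"
proof -
  obtain g' where g': "(g has_derivative g') (at p)"
    using assms unfolding differentiable_def by blast
  have "g' = (\<lambda>h. h \<bullet> adjoint g' 1)"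
    using adjoint_works[OF has_derivative_linear[OF g']] by auto
  then have "GDERIV g p :> adjoint g' 1"
    using g' unfolding gderiv_def by simp
  then show ?thesis by (simp add: grad_eqI)
qed

lemma GDERIV_sum:
  fixes h :: "'w \<Rightarrow> 'p::real_inner \<Rightarrow> real"
  assumes "\<And>w. w \<in> S \<Longrightarrow> GDERIV (h w) p :> D w"
  shows "GDERIV (\<lambda>p'. \<Sum>w\<in>S. q w * h w p') p :> (\<Sum>w\<in>S. q w *\<^sub>R D w)"
proof -
  have "((\<lambda>p'. \<Sum>w\<in>S. q w * h w p') has_derivative (\<lambda>x. \<Sum>w\<in>S. q w * (x \<bullet> D w))) (at p)"
    using assms unfolding gderiv_def by (intro has_derivative_sum has_derivative_mult_right) auto
  then show ?thesis
    unfolding gderiv_def by (simp add: inner_sum_right)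
qed

lemma GDERIV_convex_touching_above:
  fixes \<phi> \<psi> :: "'p::real_inner \<Rightarrow> real"
  assumes convex: "convex_on UNIV \<phi>" and le: "\<And>q. \<phi> q \<le> \<psi> q" and eq: "\<phi> p = \<psi> p"
    and \<psi>: "GDERIV \<psi> p :> D"
  shows "GDERIV \<phi> p :> D"
proof -
  define R where "R h = norm (\<psi> (p + h) - \<psi> p - h \<bullet> D) / norm h" for h
  have R: "(R \<longlongrightarrow> 0) (at 0)"
    using \<psi> unfolding gderiv_def has_derivative_at R_def by blast
  then have "(R \<longlongrightarrow> 0) (filtermap uminus (at 0))"
    by (simp add: filtermap_at_minus)
  then have R_minus: "((\<lambda>h. R (- h)) \<longlongrightarrow> 0) (at 0)"
    by (simp add: filterlim_filtermap)
  have bound: "norm (norm (\<phi> (p + h) - \<phi> p - h \<bullet> D) / norm h) \<le> R h + R (- h)" for h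
  proof -
    \<comment> \<open>convexity bounds the error from below by the error of \<open>\<psi>\<close> in the direction \<open>-h\<close>\<close>
    have "(1 - 1/2) *\<^sub>R (p + h) + (1/2::real) *\<^sub>R (p - h) = p"
      by (simp add: algebra_simps flip: scaleR_add_left)
    then have mid: "2 * \<phi> p \<le> \<phi> (p + h) + \<phi> (p - h)"
      using convex_onD[OF convex, of "1/2" "p + h" "p - h"] by simp
    have up: "\<phi> (p + h) - \<phi> p - h \<bullet> D \<le> \<psi> (p + h) - \<psi> p - h \<bullet> D"
      using le[of "p + h"] eq by simp
    have lo: "- (\<psi> (p + - h) - \<psi> p - (- h) \<bullet> D) \<le> \<phi> (p + h) - \<phi> p - h \<bullet> D"
      using le[of "p - h"] eq mid by simp
    have "\<bar>\<phi> (p + h) - \<phi> p - h \<bullet> D\<bar>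
        \<le> \<bar>\<psi> (p + h) - \<psi> p - h \<bullet> D\<bar> + \<bar>\<psi> (p + - h) - \<psi> p - (- h) \<bullet> D\<bar>"
      using up lo by linarith
    then have "norm (\<phi> (p + h) - \<phi> p - h \<bullet> D) / norm h \<le> R h + R (- h)"
      unfolding R_def by (simp add: divide_right_mono flip: add_divide_distrib)
    then show ?thesis
      by simp
  qed
  have "((\<lambda>h. norm (\<phi> (p + h) - \<phi> p - h \<bullet> D) / norm h) \<longlongrightarrow> 0) (at 0)"
    using R R_minus by (intro Lim_null_comparison[OF always_eventually[OF allI[OF bound]]])
      (simp add: tendsto_add_zero)
  then show ?thesis
    unfolding gderiv_def has_derivative_at by (simp add: bounded_linear_inner_left)
qed

section \<open>Lower semicontinuous convex extended-real functions\<close>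

definition lsc_convex :: "('a::real_normed_vector \<Rightarrow> ereal) \<Rightarrow> bool" where
  "lsc_convex g \<longleftrightarrow> (\<forall>z. g z \<noteq> -\<infinity>) \<and> ereal_lsc g \<and> ereal_convex g"

lemma Gamma_cl_iff_lsc_convex: "Gamma_cl g \<longleftrightarrow> lsc_convex (\<lambda>(y, p). g y p)"
  unfolding Gamma_cl_def lsc_convex_def by auto

lemma ereal_lsc_iff_eventually:
  fixes g :: "'a::topological_space \<Rightarrow> ereal"
  shows "ereal_lsc g \<longleftrightarrow> (\<forall>z c. ereal c < g z \<longrightarrow> eventually (\<lambda>z'. ereal c < g z') (nhds z))"
proof -
  have "closed {z. g z \<le> ereal c} \<longleftrightarrow> open {z. ereal c < g z}" for c
    by (simp add: closed_def Collect_neg_eq[symmetric] not_le)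
  moreover have "open {z. ereal c < g z} \<longleftrightarrow>
      (\<forall>z. ereal c < g z \<longrightarrow> eventually (\<lambda>z'. ereal c < g z') (nhds z))" for c
    by (subst open_subopen) (auto simp: eventually_nhds subset_eq)
  ultimately show ?thesis
    unfolding ereal_lsc_def by blast
qed

lemma ereal_add_less_PInfty_iff: "(a::ereal) + b < \<infinity> \<longleftrightarrow> a < \<infinity> \<and> b < \<infinity>"
  by (cases a; cases b) auto

lemma ereal_less_add_split:
  fixes x y :: ereal
  assumes "ereal c < x + y" "x \<noteq> -\<infinity>" "y \<noteq> -\<infinity>"
  obtains c1 c2 where "c = c1 + c2" "ereal c1 < x" "ereal c2 < y"
proof (cases x)
  case (real a)
  show ?thesis
  proof (cases y)
    case (real b)
    with \<open>x = ereal a\<close> assms(1) have "c < a + b" by simp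
    with \<open>x = ereal a\<close> real show ?thesis
      using that[of "a - (a + b - c) / 2" "b - (a + b - c) / 2"] by simp
  next
    case PInf
    with \<open>x = ereal a\<close> show ?thesis using that[of "a - 1" "c - (a - 1)"] by simp
  qed (use assms(3) in simp)
next
  case PInf
  obtain b where "ereal b < y"
  proof (cases y)
    case (real r)
    then show ?thesis using that[of "r - 1"] by simp
  next
    case PInf
    then show ?thesis using that[of 0] by simp
  qed (use assms(3) in simp)
  with PInf show ?thesis using that[of "c - b" b] by simp
qed (use assms(2) in simp)

lemma ereal_lsc_add:
  assumes "ereal_lsc g1" "ereal_lsc g2" "\<And>z. g1 z \<noteq> -\<infinity>" "\<And>z. g2 z \<noteq> -\<infinity>"
  shows "ereal_lsc (\<lambda>z. g1 z + g2 z)"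
  unfolding ereal_lsc_iff_eventually
proof (intro allI impI)
  fix z c assume "ereal c < g1 z + g2 z"
  then obtain c1 c2 where c: "c = c1 + c2" "ereal c1 < g1 z" "ereal c2 < g2 z"
    using assms(3,4) by (rule ereal_less_add_split)
  have "eventually (\<lambda>z'. ereal c1 < g1 z') (nhds z)" "eventually (\<lambda>z'. ereal c2 < g2 z') (nhds z)"
    using assms(1,2) c unfolding ereal_lsc_iff_eventually by auto
  then show "eventually (\<lambda>z'. ereal c < g1 z' + g2 z') (nhds z)"
    by eventually_elim (metis c(1) ereal_add_strict_mono2 plus_ereal.simps(1))
qed

lemma ereal_lsc_cmult:
  assumes "ereal_lsc g" "0 < q"
  shows "ereal_lsc (\<lambda>z. ereal q * g z)"
proof -
  have "ereal q * x \<le> ereal c \<longleftrightarrow> x \<le> ereal (c / q)" for x c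
    using assms(2) by (cases x) (auto simp: field_simps)
  then show ?thesis
    using assms(1) unfolding ereal_lsc_def by simp
qed

lemma ereal_lsc_compose:
  assumes "ereal_lsc g" "continuous_on UNIV \<phi>"
  shows "ereal_lsc (\<lambda>z. g (\<phi> z))"
  unfolding ereal_lsc_def
proof
  fix c
  have "closed (\<phi> -` {z. g z \<le> ereal c})"
    using assms unfolding ereal_lsc_def by (intro closed_vimage) auto
  then show "closed {z. g (\<phi> z) \<le> ereal c}"
    by (simp add: vimage_def)
qed

lemma ereal_lsc_ereal:
  assumes "continuous_on UNIV r"
  shows "ereal_lsc (\<lambda>z. ereal (r z))"
  unfolding ereal_lsc_def using assms by (simp add: closed_Collect_le)

lemma ereal_convex_add:
  assumes "ereal_convex g1" "ereal_convex g2" "\<And>z. g1 z \<noteq> -\<infinity>" "\<And>z. g2 z \<noteq> -\<infinity>"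
  shows "ereal_convex (\<lambda>z. g1 z + g2 z)"
  unfolding ereal_convex_def
proof (intro allI impI)
  fix z1 z2 and t :: real assume t: "0 < t \<and> t < 1"
  have "(ereal (1 - t) * g1 z1 + ereal t * g1 z2) + (ereal (1 - t) * g2 z1 + ereal t * g2 z2)
      = ereal (1 - t) * (g1 z1 + g2 z1) + ereal t * (g1 z2 + g2 z2)"
    using assms(3,4)[of z1] assms(3,4)[of z2]
    by (cases "g1 z1"; cases "g1 z2"; cases "g2 z1"; cases "g2 z2") (auto simp: algebra_simps)
  then show "g1 ((1 - t) *\<^sub>R z1 + t *\<^sub>R z2) + g2 ((1 - t) *\<^sub>R z1 + t *\<^sub>R z2)
      \<le> ereal (1 - t) * (g1 z1 + g2 z1) + ereal t * (g1 z2 + g2 z2)"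
    using assms(1,2) t unfolding ereal_convex_def by (metis add_mono)
qed

lemma ereal_convex_cmult:
  assumes "ereal_convex g" "0 < q"
  shows "ereal_convex (\<lambda>z. ereal q * g z)"
  unfolding ereal_convex_def
proof (intro allI impI)
  fix z1 z2 and t :: real assume t: "0 < t \<and> t < 1"
  have "ereal q * g ((1 - t) *\<^sub>R z1 + t *\<^sub>R z2) \<le> ereal q * (ereal (1 - t) * g z1 + ereal t * g z2)"
    using assms t unfolding ereal_convex_def by (intro ereal_mult_left_mono) auto
  also have "\<dots> = ereal (1 - t) * (ereal q * g z1) + ereal t * (ereal q * g z2)"
    using assms(2) t by (cases "g z1"; cases "g z2") (auto simp: algebra_simps)
  finally show "ereal q * g ((1 - t) *\<^sub>R z1 + t *\<^sub>R z2)
      \<le> ereal (1 - t) * (ereal q * g z1) + ereal t * (ereal q * g z2)" .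
qed

lemma ereal_convex_compose_affine:
  assumes "ereal_convex g" "linear B"
  shows "ereal_convex (\<lambda>z. g (B z + d))"
proof -
  have "B ((1 - t) *\<^sub>R z1 + t *\<^sub>R z2) + d = (1 - t) *\<^sub>R (B z1 + d) + t *\<^sub>R (B z2 + d)" for t z1 z2
  proof -
    have "B ((1 - t) *\<^sub>R z1 + t *\<^sub>R z2) = (1 - t) *\<^sub>R B z1 + t *\<^sub>R B z2"
      using assms(2) by (simp add: linear_add linear_scale)
    moreover have "d = (1 - t) *\<^sub>R d + t *\<^sub>R d"
      by (simp flip: scaleR_add_left)
    ultimately show ?thesis
      by (simp add: algebra_simps)
  qed
  then show ?thesis
    using assms(1) unfolding ereal_convex_def by simp
qed

lemma ereal_convex_ereal:
  assumes "convex_on UNIV r"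
  shows "ereal_convex (\<lambda>z. ereal (r z))"
  using convex_onD[OF assms] unfolding ereal_convex_def by simp

lemma ereal_convexI_finite:
  assumes "\<And>z. g z \<noteq> -\<infinity>"
    and "\<And>z1 z2 t. 0 < t \<Longrightarrow> t < 1 \<Longrightarrow> g z1 < \<infinity> \<Longrightarrow> g z2 < \<infinity> \<Longrightarrow>
           g ((1 - t) *\<^sub>R z1 + t *\<^sub>R z2) \<le> ereal (1 - t) * g z1 + ereal t * g z2"
  shows "ereal_convex g"
  unfolding ereal_convex_def
proof (intro allI impI)
  fix z1 z2 and t :: real assume t: "0 < t \<and> t < 1"
  show "g ((1 - t) *\<^sub>R z1 + t *\<^sub>R z2) \<le> ereal (1 - t) * g z1 + ereal t * g z2"
  proof (cases "g z1 < \<infinity> \<and> g z2 < \<infinity>")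
    case True
    with t show ?thesis
      using assms(2)[of t z1 z2] by blast
  next
    case False
    then have "ereal (1 - t) * g z1 + ereal t * g z2 = \<infinity>"
      using assms(1)[of z1] assms(1)[of z2] t by (cases "g z1"; cases "g z2") auto
    then show ?thesis
      by (simp only: ereal_less_eq(1))
  qed
qed

lemma lsc_convex_add:
  assumes "lsc_convex g1" "lsc_convex g2"
  shows "lsc_convex (\<lambda>z. g1 z + g2 z)"
proof -
  have "g1 z + g2 z \<noteq> -\<infinity>" for z
    using assms unfolding lsc_convex_def by (cases "g1 z"; cases "g2 z") auto
  then show ?thesis
    using assms unfolding lsc_convex_def by (simp add: ereal_lsc_add ereal_convex_add)
qed

lemma lsc_convex_cmult:
  assumes "lsc_convex g" "0 < q"
  shows "lsc_convex (\<lambda>z. ereal q * g z)"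
proof -
  have "ereal q * g z \<noteq> -\<infinity>" for z
    using assms unfolding lsc_convex_def by (cases "g z") auto
  then show ?thesis
    using assms unfolding lsc_convex_def by (simp add: ereal_lsc_cmult ereal_convex_cmult)
qed

lemma lsc_convex_compose_affine:
  fixes B :: "'a::euclidean_space \<Rightarrow> 'b::euclidean_space"
  assumes "lsc_convex g" "linear B"
  shows "lsc_convex (\<lambda>z. g (B z + d))"
proof -
  have "continuous_on UNIV (\<lambda>z. B z + d)"
    using assms(2) by (intro continuous_intros linear_continuous_on linear_conv_bounded_linear[THEN iffD1])
  then show ?thesis
    using assms ereal_lsc_compose ereal_convex_compose_affine unfolding lsc_convex_def by blast
qed

lemma lsc_convex_ereal:
  assumes "continuous_on UNIV r" "convex_on UNIV r"
  shows "lsc_convex (\<lambda>z. ereal (r z))"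
  using assms unfolding lsc_convex_def by (simp add: ereal_lsc_ereal ereal_convex_ereal)

lemma lsc_convex_sum:
  assumes "finite S" "\<And>w. w \<in> S \<Longrightarrow> 0 < q w \<and> lsc_convex (G w)"
  shows "lsc_convex (\<lambda>z. \<Sum>w\<in>S. ereal (q w) * G w z)"
  using assms
proof (induction S rule: finite_induct)
  case empty
  then show ?case
    using lsc_convex_ereal[of "\<lambda>_. 0"] by (simp add: zero_ereal_def convex_on_const)
next
  case (insert w S)
  then show ?case
    by (simp add: lsc_convex_add lsc_convex_cmult)
qed

lemma convex_on_real_of_ereal:
  assumes "ereal_convex g" "\<And>z. g z \<noteq> -\<infinity>" "\<And>z. g z < \<infinity>"
  shows "convex_on UNIV (\<lambda>z. real_of_ereal (g z))"
proof (rule convex_onI)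
  have real: "g z = ereal (real_of_ereal (g z))" for z
    using assms(2,3)[of z] by (cases "g z") auto
  fix t :: real and z1 z2 assume "0 < t" "t < 1"
  then have "g ((1 - t) *\<^sub>R z1 + t *\<^sub>R z2) \<le> ereal (1 - t) * g z1 + ereal t * g z2"
    using assms(1) unfolding ereal_convex_def by blast
  also have "\<dots> = ereal ((1 - t) * real_of_ereal (g z1) + t * real_of_ereal (g z2))"
    by (subst (1 2) real) simp
  finally show "real_of_ereal (g ((1 - t) *\<^sub>R z1 + t *\<^sub>R z2))
      \<le> (1 - t) * real_of_ereal (g z1) + t * real_of_ereal (g z2)"
    by (subst (asm) real) simp
qed simp

lemma ereal_lsc_in_sublevels_above_INF:
  fixes g :: "'u::topological_space \<Rightarrow> ereal"
  assumes lsc: "ereal_lsc g" and KK: "compact KK" "\<And>u. g u < \<infinity> \<Longrightarrow> u \<in> KK"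
    and finite: "(INF u. g u) < \<infinity>"
  obtains u where "\<forall>c. (INF u. g u) < ereal c \<longrightarrow> g u \<le> ereal c"
proof -
  let ?m = "INF u. g u"
  have "KK \<inter> (\<Inter>c\<in>{c. ?m < ereal c}. {u. g u \<le> ereal c}) \<noteq> {}"
  proof (rule compact_imp_fip_image[OF KK(1)])
    show "closed {u. g u \<le> ereal c}" for c
      using lsc unfolding ereal_lsc_def by blast
  next
    fix C assume C: "finite C" "C \<subseteq> {c. ?m < ereal c}"
    obtain c0 where "?m < ereal c0" "\<forall>c\<in>C. c0 \<le> c"
    proof (cases "C = {}")
      case True
      obtain c0 where "?m < ereal c0"
        using ereal_dense2[OF finite] by blast
      with True show ?thesis
        using that by blast
    next
      case False
      then have "Min C \<in> C"
        using C(1) by simp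
      with C have "?m < ereal (Min C)"
        by blast
      moreover have "\<forall>c\<in>C. Min C \<le> c"
        using C(1) by simp
      ultimately show ?thesis
        by (rule that)
    qed
    then obtain u where "g u < ereal c0"
      by (auto simp: INF_less_iff)
    then have "u \<in> KK"
      using KK(2) by (cases "g u") auto
    moreover have "\<forall>c\<in>C. g u \<le> ereal c"
      using \<open>g u < ereal c0\<close> \<open>\<forall>c\<in>C. c0 \<le> c\<close> by (meson ereal_less_eq(3) less_imp_le order_trans)
    ultimately show "KK \<inter> (\<Inter>c\<in>C. {u. g u \<le> ereal c}) \<noteq> {}"
      by blast
  qed
  then obtain u where "\<forall>c. ?m < ereal c \<longrightarrow> g u \<le> ereal c"
    by blast
  then show ?thesis
    by (rule that)
qed

lemma ereal_lsc_attains_min: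
  fixes g :: "'u::topological_space \<Rightarrow> ereal"
  assumes "ereal_lsc g" "compact KK" "\<And>u. g u < \<infinity> \<Longrightarrow> u \<in> KK" "(INF u. g u) < \<infinity>"
  obtains u where "\<forall>v. g u \<le> g v"
proof -
  obtain u where u: "\<forall>c. (INF u. g u) < ereal c \<longrightarrow> g u \<le> ereal c"
    using assms by (rule ereal_lsc_in_sublevels_above_INF)
  have "g u \<le> (INF u. g u)"
  proof (rule ccontr)
    assume "\<not> g u \<le> (INF u. g u)"
    then obtain c where "(INF u. g u) < ereal c" "ereal c < g u"
      using ereal_dense2[of "INF u. g u" "g u"] by (auto simp: not_le)
    then show False
      using u by auto
  qed
  then have "\<forall>v. g u \<le> g v"
    by (meson INF_lower UNIV_I order_trans)
  then show ?thesis
    by (rule that)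
qed

lemma Theta_cl_UNIV_iff:
  "Theta_cl UNIV g \<longleftrightarrow> lsc_convex (\<lambda>(y, p). g y p)
     \<and> (\<forall>y p p'. g y p < \<infinity> \<longrightarrow> g y p' < \<infinity>)
     \<and> (\<forall>y p. g y p < \<infinity> \<longrightarrow> (\<lambda>p'. real_of_ereal (g y p')) differentiable (at p))"
  (is "_ \<longleftrightarrow> ?convex \<and> ?dom \<and> ?diff")
proof
  assume "Theta_cl UNIV g"
  then obtain Y where Y: "edom2 g = Y \<times> UNIV"
    "\<forall>y\<in>Y. \<forall>p. (\<lambda>p'. real_of_ereal (g y p')) differentiable (at p)"
    and "Gamma_cl g"
    unfolding Theta_cl_def by auto
  moreover from Y(1) have "g y p < \<infinity> \<longleftrightarrow> y \<in> Y" for y p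
    unfolding edom2_def by blast
  ultimately show "?convex \<and> ?dom \<and> ?diff"
    by (simp add: Gamma_cl_iff_lsc_convex)
next
  assume g: "?convex \<and> ?dom \<and> ?diff"
  then have "edom2 g = {y. g y 0 < \<infinity>} \<times> UNIV"
    unfolding edom2_def by blast
  moreover have "\<forall>y\<in>{y. g y 0 < \<infinity>}. \<forall>p\<in>interior UNIV. (\<lambda>p'. real_of_ereal (g y p')) differentiable (at p)"
    using g by auto
  ultimately show "Theta_cl UNIV g"
    using g unfolding Theta_cl_def Gamma_cl_iff_lsc_convex by blast
qed

lemma Theta_cl_UNIV_not_MInfty: "Theta_cl UNIV g \<Longrightarrow> g y p \<noteq> -\<infinity>"
  unfolding Theta_cl_def Gamma_cl_def by blast

lemma Theta_cl_UNIV_dom: "Theta_cl UNIV g \<Longrightarrow> g y p < \<infinity> \<Longrightarrow> g y p' < \<infinity>"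
  unfolding Theta_cl_UNIV_iff by blast

lemma Theta_cl_UNIV_differentiable:
  "Theta_cl UNIV g \<Longrightarrow> g y p < \<infinity> \<Longrightarrow> (\<lambda>p'. real_of_ereal (g y p')) differentiable (at p)"
  unfolding Theta_cl_UNIV_iff by blast

lemma Theta_cl_UNIV_lsc_convex: "Theta_cl UNIV g \<Longrightarrow> lsc_convex (\<lambda>(y, p). g y p)"
  unfolding Theta_cl_UNIV_iff by blast

section \<open>Partial minimization\<close>

locale partial_minimization =
  fixes F :: "'y::euclidean_space \<Rightarrow> 'u::euclidean_space \<Rightarrow> 'p::euclidean_space \<Rightarrow> ereal"
    and KK :: "'u set"
  assumes lsc_convex: "lsc_convex (\<lambda>((y, u), p). F y u p)"
    and dom_indep: "F y u p < \<infinity> \<Longrightarrow> F y u p' < \<infinity>"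
    and differentiable: "F y u p < \<infinity> \<Longrightarrow> (\<lambda>p'. real_of_ereal (F y u p')) differentiable (at p)"
    and compact: "compact KK"
    and dom_subset: "F y u p < \<infinity> \<Longrightarrow> u \<in> KK"
begin

lemma not_MInfty: "F y u p \<noteq> -\<infinity>"
proof -
  have "(\<lambda>((y, u), p). F y u p) ((y, u), p) \<noteq> -\<infinity>"
    using lsc_convex unfolding lsc_convex_def by blast
  then show ?thesis
    by simp
qed

lemma INF_le: "(INF v. F y v p) \<le> F y u p"
  by (rule INF_lower) simp

lemma INF_eq_argmin:
  assumes "\<forall>v. F y u p \<le> F y v p"
  shows "(INF v. F y v p) = F y u p"
  using assms by (intro antisym[OF INF_le]) (simp add: le_INF_iff)

lemma argmin_exists:
  assumes "(INF u. F y u p) < \<infinity>"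
  obtains u where "\<forall>v. F y u p \<le> F y v p"
proof -
  have "continuous_on UNIV (\<lambda>u. ((y, u), p))"
    by (intro continuous_on_Pair continuous_on_const continuous_on_id)
  then have "ereal_lsc (\<lambda>u. (\<lambda>((y, u), p). F y u p) ((y, u), p))"
    using lsc_convex ereal_lsc_compose[of "\<lambda>((y, u), p). F y u p" "\<lambda>u. ((y, u), p)"]
    unfolding lsc_convex_def by blast
  then have "ereal_lsc (\<lambda>u. F y u p)"
    by simp
  then show ?thesis
    using compact dom_subset assms that by (rule ereal_lsc_attains_min)
qed

lemma INF_not_MInfty: "(INF u. F y u p) \<noteq> -\<infinity>"
proof
  assume "(INF u. F y u p) = -\<infinity>"
  then have "(INF u. F y u p) < \<infinity>"
    by simp
  then obtain u where "\<forall>v. F y u p \<le> F y v p"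
    by (rule argmin_exists)
  then have "(INF u. F y u p) = F y u p"
    by (rule INF_eq_argmin)
  with not_MInfty \<open>(INF u. F y u p) = -\<infinity>\<close> show False
    by simp
qed

lemma INF_dom_indep:
  assumes "(INF u. F y u p) < \<infinity>"
  shows "(INF u. F y u p') < \<infinity>"
proof -
  obtain u where "\<forall>v. F y u p \<le> F y v p"
    using assms by (rule argmin_exists)
  then have "F y u p < \<infinity>"
    using assms by (simp add: INF_eq_argmin)
  then have "F y u p' < \<infinity>"
    by (rule dom_indep)
  then show ?thesis
    using INF_le le_less_trans by blast
qed

lemma ereal_convex_INF: "ereal_convex (\<lambda>(y, p). INF u. F y u p)"
proof (rule ereal_convexI_finite)
  show "(\<lambda>(y, p). INF u. F y u p) z \<noteq> -\<infinity>" for z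
    using INF_not_MInfty by (cases z) auto
next
  fix z1 z2 :: "'y \<times> 'p" and t :: real
  assume t: "0 < t" "t < 1"
    and finite: "(\<lambda>(y, p). INF u. F y u p) z1 < \<infinity>" "(\<lambda>(y, p). INF u. F y u p) z2 < \<infinity>"
  obtain y1 p1 y2 p2 where z: "z1 = (y1, p1)" "z2 = (y2, p2)"
    by fastforce
  have "(INF u. F y1 u p1) < \<infinity>"
    using finite z by simp
  then obtain u1 where u1: "\<forall>v. F y1 u1 p1 \<le> F y1 v p1"
    by (rule argmin_exists)
  have "(INF u. F y2 u p2) < \<infinity>"
    using finite z by simp
  then obtain u2 where u2: "\<forall>v. F y2 u2 p2 \<le> F y2 v p2"
    by (rule argmin_exists)
  have "(INF u. F ((1 - t) *\<^sub>R y1 + t *\<^sub>R y2) u ((1 - t) *\<^sub>R p1 + t *\<^sub>R p2))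
      \<le> F ((1 - t) *\<^sub>R y1 + t *\<^sub>R y2) ((1 - t) *\<^sub>R u1 + t *\<^sub>R u2) ((1 - t) *\<^sub>R p1 + t *\<^sub>R p2)"
    by (rule INF_le)
  also have "\<dots> \<le> ereal (1 - t) * F y1 u1 p1 + ereal t * F y2 u2 p2"
  proof -
    have "(\<lambda>((y, u), p). F y u p) ((1 - t) *\<^sub>R ((y1, u1), p1) + t *\<^sub>R ((y2, u2), p2))
        \<le> ereal (1 - t) * (\<lambda>((y, u), p). F y u p) ((y1, u1), p1)
          + ereal t * (\<lambda>((y, u), p). F y u p) ((y2, u2), p2)"
      using lsc_convex t unfolding lsc_convex_def ereal_convex_def by blast
    then show ?thesis
      by simp
  qed
  also have "\<dots> = ereal (1 - t) * (INF u. F y1 u p1) + ereal t * (INF u. F y2 u p2)"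
    using INF_eq_argmin[OF u1] INF_eq_argmin[OF u2] by simp
  finally show "(\<lambda>(y, p). INF u. F y u p) ((1 - t) *\<^sub>R z1 + t *\<^sub>R z2)
      \<le> ereal (1 - t) * (\<lambda>(y, p). INF u. F y u p) z1 + ereal t * (\<lambda>(y, p). INF u. F y u p) z2"
    unfolding z by simp
qed

lemma ereal_lsc_INF: "ereal_lsc (\<lambda>(y, p). INF u. F y u p)"
  unfolding ereal_lsc_def
proof
  fix c :: real
  let ?T = "{(u, y, p). F y u p \<le> ereal c}"
  have "continuous_on UNIV (\<lambda>(u, y, p). ((y, u), p))"
    unfolding case_prod_beta by (intro continuous_intros)
  then have "closed ((\<lambda>(u, y, p). ((y, u), p)) -` {z. (\<lambda>((y, u), p). F y u p) z \<le> ereal c})"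
    using lsc_convex unfolding lsc_convex_def ereal_lsc_def by (intro closed_vimage) auto
  moreover have "?T = (\<lambda>(u, y, p). ((y, u), p)) -` {z. (\<lambda>((y, u), p). F y u p) z \<le> ereal c}"
    by auto
  ultimately have closed: "closed ?T"
    by simp
  have sublevel: "(INF u. F y u p) \<le> ereal c \<longleftrightarrow> (\<exists>u. u \<in> KK \<and> (u, y, p) \<in> ?T)" for y p
  proof
    assume le: "(INF u. F y u p) \<le> ereal c"
    then have "(INF u. F y u p) < \<infinity>"
      using le_less_trans[OF le, of \<infinity>] by simp
    then obtain u where u: "\<forall>v. F y u p \<le> F y v p"
      by (rule argmin_exists)
    with le have "F y u p \<le> ereal c"
      by (simp add: INF_eq_argmin)
    then show "\<exists>u. u \<in> KK \<and> (u, y, p) \<in> ?T"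
      using dom_subset[of y u p] by (cases "F y u p") auto
  next
    assume "\<exists>u. u \<in> KK \<and> (u, y, p) \<in> ?T"
    then obtain u where "F y u p \<le> ereal c"
      by blast
    with INF_le[of y p u] show "(INF u. F y u p) \<le> ereal c"
      by (rule order.trans)
  qed
  have "{z. (\<lambda>(y, p). INF u. F y u p) z \<le> ereal c} = {z. \<exists>u. u \<in> KK \<and> (u, z) \<in> ?T}"
    using sublevel by auto
  then show "closed {z. (\<lambda>(y, p). INF u. F y u p) z \<le> ereal c}"
    using closed_compact_projection[OF compact closed] by simp
qed

lemma GDERIV_INF:
  assumes min: "\<forall>v. F y u p \<le> F y v p" and finite: "F y u p < \<infinity>"
    and D: "GDERIV (\<lambda>p'. real_of_ereal (F y u p')) p :> D"
  shows "GDERIV (\<lambda>p'. real_of_ereal (INF u. F y u p')) p :> D"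
proof (rule GDERIV_convex_touching_above[OF _ _ _ D])
  have "(INF u. F y u p) < \<infinity>"
    using finite min by (simp add: INF_eq_argmin)
  then have INF_finite: "(INF u. F y u p') < \<infinity>" for p'
    by (rule INF_dom_indep)
  have "linear (\<lambda>p'::'p. (0::'y, p'))"
    by (rule linearI) simp_all
  then have "ereal_convex (\<lambda>p'. (\<lambda>(y, p). INF u. F y u p) ((0, p') + (y, 0)))"
    by (rule ereal_convex_compose_affine[OF ereal_convex_INF])
  then show "convex_on UNIV (\<lambda>p'. real_of_ereal (INF u. F y u p'))"
    using INF_not_MInfty INF_finite by (intro convex_on_real_of_ereal) auto
  show "real_of_ereal (INF u. F y u q) \<le> real_of_ereal (F y u q)" for q
    using INF_le[of y q u] INF_not_MInfty[of y q] dom_indep[OF finite, of q]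
    by (cases "INF u. F y u q"; cases "F y u q") auto
  show "real_of_ereal (INF u. F y u p) = real_of_ereal (F y u p)"
    using min by (simp add: INF_eq_argmin)
qed

lemma Theta_cl_INF: "Theta_cl UNIV (\<lambda>y p. INF u. F y u p)"
  unfolding Theta_cl_UNIV_iff
proof (intro conjI allI impI)
  show "lsc_convex (\<lambda>(y, p). INF u. F y u p)"
    unfolding lsc_convex_def using INF_not_MInfty ereal_lsc_INF ereal_convex_INF by auto
  show "(INF u. F y u p') < \<infinity>" if "(INF u. F y u p) < \<infinity>" for y p p'
    using that by (rule INF_dom_indep)
  show "(\<lambda>p'. real_of_ereal (INF u. F y u p')) differentiable (at p)"
    if finite: "(INF u. F y u p) < \<infinity>" for y p
  proof -
    obtain u where min: "\<forall>v. F y u p \<le> F y v p"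
      using finite by (rule argmin_exists)
    with finite have "F y u p < \<infinity>"
      by (simp add: INF_eq_argmin)
    then have "GDERIV (\<lambda>p'. real_of_ereal (F y u p')) p :> grad (\<lambda>p'. real_of_ereal (F y u p')) p"
      by (intro GDERIV_grad differentiable)
    with min \<open>F y u p < \<infinity>\<close>
    have "GDERIV (\<lambda>p'. real_of_ereal (INF u. F y u p')) p :> grad (\<lambda>p'. real_of_ereal (F y u p')) p"
      by (rule GDERIV_INF)
    then show ?thesis
      unfolding gderiv_def differentiable_def by blast
  qed
qed

end

section \<open>Moreau envelopes\<close>

lemma convex_on_norm_power2: "convex_on UNIV (\<lambda>v::'a::real_inner. (norm v)\<^sup>2)"
proof (rule convex_onI)
  fix t :: real and a b :: 'a assume "0 < t" "t < 1"
  have "(1 - t) * (norm a)\<^sup>2 + t * (norm b)\<^sup>2 - (norm ((1 - t) *\<^sub>R a + t *\<^sub>R b))\<^sup>2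
      = t * (1 - t) * (norm (a - b))\<^sup>2"
    unfolding power2_norm_eq_inner
    by (simp add: inner_add_left inner_add_right inner_diff_left inner_diff_right inner_commute algebra_simps)
  moreover have "0 \<le> t * (1 - t) * (norm (a - b))\<^sup>2"
    using \<open>0 < t\<close> \<open>t < 1\<close> by simp
  ultimately show "(norm ((1 - t) *\<^sub>R a + t *\<^sub>R b))\<^sup>2 \<le> (1 - t) * (norm a)\<^sup>2 + t * (norm b)\<^sup>2"
    by linarith
qed simp

lemma lsc_convex_compose_linear:
  fixes B :: "'a::euclidean_space \<Rightarrow> 'b::euclidean_space"
  assumes "lsc_convex g" "linear B"
  shows "lsc_convex (\<lambda>z. g (B z))"
  using lsc_convex_compose_affine[OF assms, of 0] by simp

lemma moreau_le: "moreau \<mu> g p \<le> g p"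
  unfolding moreau_def by (rule INF_lower2[of p]) auto

lemma moreau_less_infty_imp:
  assumes "moreau \<mu> g p < \<infinity>"
  obtains p' where "g p' < \<infinity>"
proof -
  obtain p' where "g p' + ereal ((norm (p - p'))\<^sup>2 / (2 * \<mu>)) < \<infinity>"
    using assms unfolding moreau_def INF_less_iff by blast
  then have "g p' < \<infinity>"
    by (cases "g p'") auto
  then show ?thesis
    by (rule that)
qed

lemma lsc_convex_moreau_objective:
  fixes G :: "'y::euclidean_space \<Rightarrow> 'p::euclidean_space \<Rightarrow> ereal"
  assumes "Gamma_cl G" "0 < \<mu>"
  shows "lsc_convex (\<lambda>((y, p'), p). G y p' + ereal ((norm (p - p'))\<^sup>2 / (2 * \<mu>)))"
proof -
  have "linear (\<lambda>z::('y \<times> 'p) \<times> 'p. fst z)"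
    by (rule linearI) simp_all
  then have G_fst: "lsc_convex (\<lambda>z::('y \<times> 'p) \<times> 'p. (\<lambda>(y, p). G y p) (fst z))"
    using assms(1) unfolding Gamma_cl_iff_lsc_convex by (rule lsc_convex_compose_linear[rotated])
  have "continuous_on UNIV (\<lambda>v::'p. (norm v)\<^sup>2 / (2 * \<mu>))"
    using assms(2) by (intro continuous_intros) auto
  moreover have "convex_on UNIV (\<lambda>v::'p. (norm v)\<^sup>2 / (2 * \<mu>))"
    using assms(2) by (intro convex_on_cdiv convex_on_norm_power2) simp
  ultimately have "lsc_convex (\<lambda>v::'p. ereal ((norm v)\<^sup>2 / (2 * \<mu>)))"
    by (rule lsc_convex_ereal)
  then have "lsc_convex (\<lambda>z::('y \<times> 'p) \<times> 'p. ereal ((norm (snd z - snd (fst z)))\<^sup>2 / (2 * \<mu>)))"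
    by (rule lsc_convex_compose_linear) (rule linearI; simp add: algebra_simps)
  with G_fst have "lsc_convex (\<lambda>z. (\<lambda>(y, p). G y p) (fst z) + ereal ((norm (snd z - snd (fst z)))\<^sup>2 / (2 * \<mu>)))"
    by (rule lsc_convex_add)
  then show ?thesis
    by (simp add: case_prod_beta')
qed

lemma partial_minimization_moreau_objective:
  fixes G :: "'y::euclidean_space \<Rightarrow> 'p::euclidean_space \<Rightarrow> ereal"
  assumes G: "Gamma_cl G" and PP: "compact PP" "\<And>y p. G y p < \<infinity> \<Longrightarrow> p \<in> PP" and \<mu>: "0 < \<mu>"
  shows "partial_minimization (\<lambda>y p' p. G y p' + ereal ((norm (p - p'))\<^sup>2 / (2 * \<mu>))) PP"
proof
  have G_not_MInfty: "G y p' \<noteq> -\<infinity>" for y p'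
    using G unfolding Gamma_cl_def by blast
  have finite_iff: "G y p' + ereal ((norm (p - p'))\<^sup>2 / (2 * \<mu>)) < \<infinity> \<longleftrightarrow> G y p' < \<infinity>" for y p' p
    by (simp add: ereal_add_less_PInfty_iff)
  show "lsc_convex (\<lambda>((y, p'), p). G y p' + ereal ((norm (p - p'))\<^sup>2 / (2 * \<mu>)))"
    using G \<mu> by (rule lsc_convex_moreau_objective)
  show "G y p' + ereal ((norm (q - p'))\<^sup>2 / (2 * \<mu>)) < \<infinity>"
    if "G y p' + ereal ((norm (p - p'))\<^sup>2 / (2 * \<mu>)) < \<infinity>" for y p' p q
    using that finite_iff by blast
  show "(\<lambda>q. real_of_ereal (G y p' + ereal ((norm (q - p'))\<^sup>2 / (2 * \<mu>)))) differentiable (at p)"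
    if finite: "G y p' + ereal ((norm (p - p'))\<^sup>2 / (2 * \<mu>)) < \<infinity>" for y p' p
  proof -
    obtain c where "G y p' = ereal c"
      using finite G_not_MInfty[of y p'] finite_iff by (cases "G y p'") auto
    then have "(\<lambda>q. real_of_ereal (G y p' + ereal ((norm (q - p'))\<^sup>2 / (2 * \<mu>))))
        = (\<lambda>q. c + ((q - p') \<bullet> (q - p')) / (2 * \<mu>))"
      by (simp add: fun_eq_iff power2_norm_eq_inner)
    moreover have "(\<lambda>q. c + ((q - p') \<bullet> (q - p')) / (2 * \<mu>)) differentiable (at p)"
      using \<mu> by (intro derivative_intros differentiable_inner) auto
    ultimately show ?thesis
      by simp
  qed
  show "compact PP"
    by (rule PP(1))
  show "p' \<in> PP" if "G y p' + ereal ((norm (p - p'))\<^sup>2 / (2 * \<mu>)) < \<infinity>" for y p' p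
    using that finite_iff PP(2) by blast
qed

lemma Theta_cl_moreau:
  fixes G :: "'y::euclidean_space \<Rightarrow> 'p::euclidean_space \<Rightarrow> ereal"
  assumes "Gamma_cl G" "compact PP" "\<And>y p. G y p < \<infinity> \<Longrightarrow> p \<in> PP" "0 < \<mu>"
  shows "Theta_cl UNIV (\<lambda>y. moreau \<mu> (G y))"
  unfolding moreau_def
  using partial_minimization.Theta_cl_INF[OF partial_minimization_moreau_objective[OF assms]] .

lemma Supp_measure_pos: "w \<in> Supp M X \<Longrightarrow> 0 < measure M (X -` {w} \<inter> space M)"
  unfolding Supp_def by simp

lemma Eexp_mono: "(\<And>w. w \<in> Supp M X \<Longrightarrow> G w \<le> H w) \<Longrightarrow> Eexp M X G \<le> Eexp M X H"
  unfolding Eexp_def by (intro sum_mono ereal_mult_left_mono) auto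

lemma Eexp_less_infty_iff:
  assumes "finite (Supp M X)" "\<And>w. w \<in> Supp M X \<Longrightarrow> G w \<noteq> -\<infinity>"
  shows "Eexp M X G < \<infinity> \<longleftrightarrow> (\<forall>w\<in>Supp M X. G w < \<infinity>)"
proof -
  have "ereal (measure M (X -` {w} \<inter> space M)) * G w = \<infinity> \<longleftrightarrow> G w = \<infinity>" if "w \<in> Supp M X" for w
    using assms(2) Supp_measure_pos[OF that] that by (cases "G w") auto
  then show ?thesis
    using assms(1) unfolding Eexp_def by (simp add: sum_Pinfty less_top[symmetric])
qed

lemma real_of_ereal_Eexp:
  assumes "\<And>w. w \<in> Supp M X \<Longrightarrow> \<bar>G w\<bar> \<noteq> \<infinity>"
  shows "real_of_ereal (Eexp M X G) = (\<Sum>w\<in>Supp M X. measure M (X -` {w} \<inter> space M) * real_of_ereal (G w))"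
proof -
  have "Eexp M X G = (\<Sum>w\<in>Supp M X. ereal (measure M (X -` {w} \<inter> space M) * real_of_ereal (G w)))"
    unfolding Eexp_def
  proof (rule sum.cong)
    fix w assume "w \<in> Supp M X"
    then have "G w = ereal (real_of_ereal (G w))"
      using assms by (simp add: ereal_real')
    then show "ereal (measure M (X -` {w} \<inter> space M)) * G w
        = ereal (measure M (X -` {w} \<inter> space M) * real_of_ereal (G w))"
      by (metis times_ereal.simps(1))
  qed simp
  then show ?thesis
    by simp
qed

lemma lsc_convex_Eexp:
  assumes "finite (Supp M X)" "\<And>w. w \<in> Supp M X \<Longrightarrow> lsc_convex (G w)"
  shows "lsc_convex (\<lambda>z. Eexp M X (\<lambda>w. G w z))"
  unfolding Eexp_def using assms Supp_measure_pos by (intro lsc_convex_sum) auto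

lemma GDERIV_Eexp:
  assumes "\<And>w q. w \<in> Supp M X \<Longrightarrow> \<bar>G w q\<bar> \<noteq> \<infinity>"
    and "\<And>w. w \<in> Supp M X \<Longrightarrow> GDERIV (\<lambda>q. real_of_ereal (G w q)) p :> D w"
  shows "GDERIV (\<lambda>q. real_of_ereal (Eexp M X (\<lambda>w. G w q))) p :> Evec M X D"
proof -
  have "(\<lambda>q. real_of_ereal (Eexp M X (\<lambda>w. G w q)))
      = (\<lambda>q. \<Sum>w\<in>Supp M X. measure M (X -` {w} \<inter> space M) * real_of_ereal (G w q))"
    using assms(1) by (simp add: real_of_ereal_Eexp)
  then show ?thesis
    unfolding Evec_def using assms(2) by (simp add: GDERIV_sum)
qed

section \<open>One stage of dynamic programming\<close>

locale dp_stage =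
  fixes M :: "'a measure" and X :: "'a \<Rightarrow> 'w"
    and cost :: "'x::euclidean_space \<Rightarrow> 'u::euclidean_space \<Rightarrow> 'w \<Rightarrow> 'p::euclidean_space \<Rightarrow> ereal"
    and g :: "'x \<Rightarrow> 'u \<Rightarrow> 'w \<Rightarrow> 'x" and V :: "'x \<Rightarrow> 'p \<Rightarrow> ereal" and KK :: "'u set"
  assumes finite_Supp: "finite (Supp M X)"
    and Theta_cl_cost: "w \<in> Supp M X \<Longrightarrow> Theta_cl UNIV (\<lambda>(x, u). cost x u w)"
    and affine_g: "w \<in> Supp M X \<Longrightarrow> \<exists>A c. linear A \<and> (\<forall>x u. g x u w = A (x, u) + c)"
    and Theta_cl_V: "Theta_cl UNIV V"
    and compact_KK: "compact KK"
    and dom_subset_KK: "(\<And>w. w \<in> Supp M X \<Longrightarrow> cost x u w p < \<infinity>) \<Longrightarrow> u \<in> KK"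
begin

abbreviation stage_cost :: "'x \<Rightarrow> 'u \<Rightarrow> 'p \<Rightarrow> ereal" where
  "stage_cost x u p \<equiv> Eexp M X (\<lambda>w. cost x u w p + V (g x u w) p)"

lemma cost_not_MInfty: "w \<in> Supp M X \<Longrightarrow> cost x u w p \<noteq> -\<infinity>"
  using Theta_cl_UNIV_not_MInfty[OF Theta_cl_cost, of w "(x, u)"] by simp

lemma cost_dom_indep: "w \<in> Supp M X \<Longrightarrow> cost x u w p < \<infinity> \<Longrightarrow> cost x u w p' < \<infinity>"
  using Theta_cl_UNIV_dom[OF Theta_cl_cost, of w "(x, u)"] by simp

lemma cost_differentiable:
  "w \<in> Supp M X \<Longrightarrow> cost x u w p < \<infinity> \<Longrightarrow> (\<lambda>p'. real_of_ereal (cost x u w p')) differentiable (at p)"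
  using Theta_cl_UNIV_differentiable[OF Theta_cl_cost, of w "(x, u)"] by simp

lemma stage_cost_less_infty_iff:
  "stage_cost x u p < \<infinity> \<longleftrightarrow> (\<forall>w\<in>Supp M X. cost x u w p < \<infinity> \<and> V (g x u w) p < \<infinity>)"
proof -
  have not_MInfty: "cost x u w p + V (g x u w) p \<noteq> -\<infinity>" if "w \<in> Supp M X" for w
    using cost_not_MInfty[OF that] Theta_cl_UNIV_not_MInfty[OF Theta_cl_V]
    by (cases "cost x u w p"; cases "V (g x u w) p") auto
  have "stage_cost x u p < \<infinity> \<longleftrightarrow> (\<forall>w\<in>Supp M X. cost x u w p + V (g x u w) p < \<infinity>)"
    by (rule Eexp_less_infty_iff[of M X "\<lambda>w. cost x u w p + V (g x u w) p", OF finite_Supp not_MInfty])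
  then show ?thesis
    by (simp only: ereal_add_less_PInfty_iff)
qed

lemma lsc_convex_V_affine:
  assumes "w \<in> Supp M X"
  shows "lsc_convex (\<lambda>((x, u), p). V (g x u w) p)"
proof -
  obtain A c where A: "linear A" and g: "\<And>x u. g x u w = A (x, u) + c"
    using affine_g[OF assms] by blast
  have "linear (\<lambda>z::('x \<times> 'u) \<times> 'p. (A (fst z), snd z))"
    using A by (intro linearI) (simp_all add: linear_add linear_scale)
  then have "lsc_convex (\<lambda>z. (\<lambda>(y, p). V y p) ((A (fst z), snd z) + (c, 0)))"
    using Theta_cl_UNIV_lsc_convex[OF Theta_cl_V] by (intro lsc_convex_compose_affine)
  then show ?thesis
    by (simp add: g case_prod_beta')
qed

lemma lsc_convex_stage_cost: "lsc_convex (\<lambda>((x, u), p). stage_cost x u p)"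
proof -
  have "lsc_convex (\<lambda>((x, u), p). cost x u w p + V (g x u w) p)" if "w \<in> Supp M X" for w
    using lsc_convex_add[OF Theta_cl_UNIV_lsc_convex[OF Theta_cl_cost[OF that]] lsc_convex_V_affine[OF that]]
    by (simp add: case_prod_beta')
  then have "lsc_convex (\<lambda>z. Eexp M X (\<lambda>w. (\<lambda>((x, u), p). cost x u w p + V (g x u w) p) z))"
    by (intro lsc_convex_Eexp finite_Supp)
  then show ?thesis
    by (simp add: case_prod_beta')
qed

lemma GDERIV_stage_cost:
  assumes "stage_cost x u p < \<infinity>"
  shows "GDERIV (\<lambda>p'. real_of_ereal (stage_cost x u p')) p :>
    Evec M X (\<lambda>w. grad (\<lambda>p'. real_of_ereal (cost x u w p')) p
                  + grad (\<lambda>p'. real_of_ereal (V (g x u w) p')) p)"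
proof (rule GDERIV_Eexp)
  fix w assume w: "w \<in> Supp M X"
  then have finite: "cost x u w p' < \<infinity>" "V (g x u w) p' < \<infinity>" for p'
    using assms cost_dom_indep Theta_cl_UNIV_dom[OF Theta_cl_V] unfolding stage_cost_less_infty_iff by blast+
  have not_MInfty: "cost x u w p' \<noteq> -\<infinity>" "V (g x u w) p' \<noteq> -\<infinity>" for p'
    using cost_not_MInfty[OF w] Theta_cl_UNIV_not_MInfty[OF Theta_cl_V] by blast+
  have real: "\<bar>cost x u w q\<bar> \<noteq> \<infinity>" "\<bar>V (g x u w) q\<bar> \<noteq> \<infinity>" for q
    using finite[of q] not_MInfty[of q] by auto
  show "\<bar>cost x u w q + V (g x u w) q\<bar> \<noteq> \<infinity>" for q
    using real[of q] by (cases "cost x u w q"; cases "V (g x u w) q") auto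
  have "(\<lambda>q. real_of_ereal (cost x u w q + V (g x u w) q))
      = (\<lambda>q. real_of_ereal (cost x u w q) + real_of_ereal (V (g x u w) q))"
    using real by (simp add: real_of_ereal_add)
  moreover have "GDERIV (\<lambda>q. real_of_ereal (cost x u w q) + real_of_ereal (V (g x u w) q)) p :>
      grad (\<lambda>p'. real_of_ereal (cost x u w p')) p + grad (\<lambda>p'. real_of_ereal (V (g x u w) p')) p"
    using finite w by (intro GDERIV_add GDERIV_grad cost_differentiable Theta_cl_UNIV_differentiable[OF Theta_cl_V])
  ultimately show "GDERIV (\<lambda>q. real_of_ereal (cost x u w q + V (g x u w) q)) p :>
      grad (\<lambda>p'. real_of_ereal (cost x u w p')) p + grad (\<lambda>p'. real_of_ereal (V (g x u w) p')) p"
    by simp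
qed

sublocale partial_minimization stage_cost KK
proof
  show "lsc_convex (\<lambda>((x, u), p). stage_cost x u p)"
    by (rule lsc_convex_stage_cost)
  show "stage_cost x u p' < \<infinity>" if "stage_cost x u p < \<infinity>" for x u p p'
    using that cost_dom_indep Theta_cl_UNIV_dom[OF Theta_cl_V] unfolding stage_cost_less_infty_iff by blast
  show "(\<lambda>p'. real_of_ereal (stage_cost x u p')) differentiable (at p)" if "stage_cost x u p < \<infinity>" for x u p
    using GDERIV_stage_cost[OF that] unfolding gderiv_def differentiable_def by blast
  show "compact KK"
    by (rule compact_KK)
  show "u \<in> KK" if "stage_cost x u p < \<infinity>" for x u p
    using that dom_subset_KK unfolding stage_cost_less_infty_iff by blast
qed

end

section \<open>Value functions\<close>

lemma dp_mono:
  assumes "\<And>t x u w p. L1 t x u w p \<le> L2 t x u w p" "\<And>x p. K1 x p \<le> K2 x p"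
  shows "dp M W f L1 K1 T k x p \<le> dp M W f L2 K2 T k x p"
proof (induction k arbitrary: x p)
  case 0
  then show ?case using assms(2) by simp
next
  case (Suc k)
  show ?case
    unfolding dp.simps by (intro INF_mono' Eexp_mono add_mono assms(1) Suc.IH)
qed

lemma Vmu_le_Vfun: "Vmu \<mu> M W f L K T t x p \<le> Vfun M W f L K T t x p"
  unfolding Vmu_def Vfun_def Lmu_def Kmu_def by (intro dp_mono moreau_le)

lemma dp_diff_Suc:
  assumes "t < T"
  shows "dp M W f L K T (T - t) x p
    = (INF u. Eexp M (W (Suc t)) (\<lambda>w. L t x u w p + dp M W f L K T (T - Suc t) (f t x u w) p))"
proof -
  have "T - t = Suc (T - Suc t)" "T - Suc (T - Suc t) = t"
    using assms by simp_all
  then show ?thesis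
    by simp
qed

lemma Vfun_Suc:
  "t < T \<Longrightarrow> Vfun M W f L K T t x p
    = (INF u. Eexp M (W (Suc t)) (\<lambda>w. L t x u w p + Vfun M W f L K T (Suc t) (f t x u w) p))"
  unfolding Vfun_def by (rule dp_diff_Suc)

lemma Vmu_Suc:
  "t < T \<Longrightarrow> Vmu \<mu> M W f L K T t
    = (\<lambda>x p. INF u. Eexp M (W (Suc t)) (\<lambda>w. Lmu \<mu> L t x u w p + Vmu \<mu> M W f L K T (Suc t) (f t x u w) p))"
  unfolding Vmu_def by (intro ext dp_diff_Suc)

lemma Vmu_final: "Vmu \<mu> M W f L K T T = Kmu \<mu> K"
  unfolding Vmu_def by simp

lemma traj_cong_nonanticipative:
  assumes "nonanticipative T \<pi>" "\<forall>i\<in>{1..s}. ws i = ws' i" "s \<le> T"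
  shows "traj f x0 \<pi> ws s = traj f x0 \<pi> ws' s"
  using assms(2,3)
proof (induction s)
  case (Suc s)
  then have "\<forall>i\<in>{1..s}. ws i = ws' i" "\<pi> s ws = \<pi> s ws'"
    using assms(1) unfolding nonanticipative_def by auto
  with Suc show ?case
    by simp
qed simp

lemma path_cost_less_infty_stage:
  fixes L :: "nat \<Rightarrow> 'x \<Rightarrow> 'u \<Rightarrow> 'w \<Rightarrow> 'p \<Rightarrow> ereal"
  assumes "path_cost f L K T x0 \<pi> ws p < \<infinity>" "t < T"
  shows "L t (traj f x0 \<pi> ws t) (\<pi> t ws) (ws (Suc t)) p < \<infinity>"
proof -
  have "(\<Sum>t<T. L t (traj f x0 \<pi> ws t) (\<pi> t ws) (ws (Suc t)) p) < \<infinity>"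
    using assms(1) by (simp add: path_cost_def ereal_add_less_PInfty_iff)
  then show ?thesis
    using assms(2) by (auto simp: sum_Pinfty less_top[symmetric])
qed

lemma path_cost_less_infty_final:
  fixes K :: "'x \<Rightarrow> 'p \<Rightarrow> ereal"
  shows "path_cost f L K T x0 \<pi> ws p < \<infinity> \<Longrightarrow> K (traj f x0 \<pi> ws T) p < \<infinity>"
  by (simp add: path_cost_def ereal_add_less_PInfty_iff)

lemma traj_fun_upd_Suc:
  assumes "nonanticipative T \<pi>" "t < T"
  shows "traj f x0 \<pi> (ws(Suc t := w)) t = traj f x0 \<pi> ws t"
    and "\<pi> t (ws(Suc t := w)) = \<pi> t ws"
proof -
  have agree: "\<forall>i\<in>{1..t}. (ws(Suc t := w)) i = ws i"
    by simp
  show "traj f x0 \<pi> (ws(Suc t := w)) t = traj f x0 \<pi> ws t"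
    using agree assms(2) by (intro traj_cong_nonanticipative[OF assms(1)]) simp_all
  show "\<pi> t (ws(Suc t := w)) = \<pi> t ws"
    using assms agree unfolding nonanticipative_def by blast
qed

text \<open>The value at a state is at most the expected cost of following the policy from there.\<close>
lemma Vfun_less_infty_along_policy:
  fixes L :: "nat \<Rightarrow> 'x \<Rightarrow> 'u \<Rightarrow> 'w \<Rightarrow> 'p \<Rightarrow> ereal"
  assumes \<pi>: "nonanticipative T \<pi>"
    and cost: "\<forall>ws\<in>(\<Pi>\<^sub>E i\<in>{1..T}. Supp M (W i)). path_cost f L K T x0 \<pi> ws p < \<infinity>"
    and ws: "ws \<in> (\<Pi>\<^sub>E i\<in>{1..T}. Supp M (W i))" and "t \<le> T"
  shows "Vfun M W f L K T t (traj f x0 \<pi> ws t) p < \<infinity>"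
  using \<open>t \<le> T\<close> ws
proof (induction "T - t" arbitrary: t ws)
  case 0
  then have "t = T"
    by simp
  then show ?case
    using path_cost_less_infty_final[OF bspec[OF cost "0.prems"(2)]] by (simp add: Vfun_def)
next
  case (Suc k)
  then have t: "t < T"
    by simp
  let ?x = "traj f x0 \<pi> ws t" and ?u = "\<pi> t ws"
  have "L t ?x ?u w p + Vfun M W f L K T (Suc t) (f t ?x ?u w) p < \<infinity>"
    if w: "w \<in> Supp M (W (Suc t))" for w
  proof -
    have "ws(Suc t := w) \<in> (\<Pi>\<^sub>E i\<in>insert (Suc t) {1..T}. Supp M (W i))"
      using w Suc.prems(2) by (rule PiE_fun_upd)
    moreover have "insert (Suc t) {1..T} = {1..T}"
      using t by auto
    ultimately have ws': "ws(Suc t := w) \<in> (\<Pi>\<^sub>E i\<in>{1..T}. Supp M (W i))"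
      by simp
    note deviation = traj_fun_upd_Suc(1)[OF \<pi> t, of f x0 ws w] traj_fun_upd_Suc(2)[OF \<pi> t, of ws w]
    have "L t ?x ?u w p < \<infinity>"
      using path_cost_less_infty_stage[OF bspec[OF cost ws'] t] unfolding deviation by simp
    moreover have "Vfun M W f L K T (Suc t) (traj f x0 \<pi> (ws(Suc t := w)) (Suc t)) p < \<infinity>"
      by (rule Suc.hyps(1)) (use Suc.hyps(2) t ws' in simp_all)
    then have "Vfun M W f L K T (Suc t) (f t ?x ?u w) p < \<infinity>"
      unfolding traj.simps deviation by simp
    ultimately show ?thesis
      by (simp add: ereal_add_less_PInfty_iff)
  qed
  then have "Eexp M (W (Suc t)) (\<lambda>w. L t ?x ?u w p + Vfun M W f L K T (Suc t) (f t ?x ?u w) p) < \<infinity>"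
    unfolding Eexp_def by (auto simp: sum_Pinfty less_top[symmetric])
  then show ?case
    unfolding Vfun_Suc[OF t] by (rule le_less_trans[OF INF_lower, rotated]) simp
qed

lemma (in prob_space) Supp_nonempty: "finite_support M X \<Longrightarrow> Supp M X \<noteq> {}"
  unfolding finite_support_def using AE_False by force

lemma (in prob_space) prob_joint_atom_pos:
  fixes W :: "'i \<Rightarrow> 'a \<Rightarrow> 'w::t1_space"
  assumes indep: "indep_vars (\<lambda>_. borel) W I" and I: "finite I" "I \<noteq> {}"
    and ws: "ws \<in> (\<Pi>\<^sub>E i\<in>I. Supp M (W i))"
  shows "0 < prob {\<omega>\<in>space M. \<forall>i\<in>I. W i \<omega> = ws i}"
proof -
  have "indep_sets (\<lambda>i. {W i -` A \<inter> space M | A. A \<in> sets borel}) I"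
    using indep unfolding indep_vars_def2 by blast
  then have "prob (\<Inter>i\<in>I. W i -` {ws i} \<inter> space M) = (\<Prod>i\<in>I. prob (W i -` {ws i} \<inter> space M))"
    using I by (intro indep_setsD) auto
  moreover have "(\<Inter>i\<in>I. W i -` {ws i} \<inter> space M) = {\<omega>\<in>space M. \<forall>i\<in>I. W i \<omega> = ws i}"
    using I(2) by auto
  moreover have "0 < (\<Prod>i\<in>I. prob (W i -` {ws i} \<inter> space M))"
    using ws by (intro prod_pos) (auto simp: PiE_iff Supp_measure_pos)
  ultimately show ?thesis
    by simp
qed

text \<open>By independence, every scenario built from support points has positive probability.\<close>
lemma Phi_less_infty_imp_policy:
  fixes W :: "nat \<Rightarrow> 'a \<Rightarrow> 'w::t1_space" and L :: "nat \<Rightarrow> 'x \<Rightarrow> 'u \<Rightarrow> 'w \<Rightarrow> 'p \<Rightarrow> ereal"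
  assumes "prob_space M" "prob_space.indep_vars M (\<lambda>_. borel) W {1..T}" "1 \<le> T"
    and "\<And>t. t \<in> {1..T} \<Longrightarrow> finite (Supp M (W t))"
    and "Phi M W f L K T x0 p < \<infinity>"
  obtains \<pi> where "nonanticipative T \<pi>"
    "\<forall>ws\<in>(\<Pi>\<^sub>E i\<in>{1..T}. Supp M (W i)). path_cost f L K T x0 \<pi> ws p < \<infinity>"
proof -
  let ?S = "\<Pi>\<^sub>E i\<in>{1..T}. Supp M (W i)"
  let ?P = "\<lambda>ws. measure M {\<omega>\<in>space M. \<forall>i\<in>{1..T}. W i \<omega> = ws i}"
  obtain \<pi> where \<pi>: "nonanticipative T \<pi>"
    and finite_sum: "(\<Sum>ws\<in>?S. ereal (?P ws) * path_cost f L K T x0 \<pi> ws p) < \<infinity>"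
    using assms(5) unfolding Phi_def INF_less_iff by blast
  have "\<forall>ws\<in>?S. path_cost f L K T x0 \<pi> ws p < \<infinity>"
  proof
    fix ws assume ws: "ws \<in> ?S"
    have "finite ?S"
      using assms(4) by (intro finite_PiE) auto
    then have "ereal (?P ws) * path_cost f L K T x0 \<pi> ws p < \<infinity>"
      using finite_sum ws by (auto simp: sum_Pinfty less_top[symmetric])
    moreover have "0 < ?P ws"
      using prob_space.prob_joint_atom_pos[OF assms(1,2) _ _ ws] assms(3) by simp
    ultimately show "path_cost f L K T x0 \<pi> ws p < \<infinity>"
      by (cases "path_cost f L K T x0 \<pi> ws p") auto
  qed
  with \<pi> show ?thesis
    by (rule that)
qed

lemma Vfun_dom_nonempty:
  fixes W :: "nat \<Rightarrow> 'a \<Rightarrow> 'w::t1_space" and L :: "nat \<Rightarrow> 'x \<Rightarrow> 'u \<Rightarrow> 'w \<Rightarrow> 'p \<Rightarrow> ereal"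
  assumes "prob_space M" "prob_space.indep_vars M (\<lambda>_. borel) W {1..T}" "1 \<le> T"
    and "\<forall>t\<in>{1..T}. finite_support M (W t)"
    and "Phi M W f L K T x0 p < \<infinity>" and "t \<le> T"
  shows "edom2 (Vfun M W f L K T t) \<noteq> {}"
proof -
  obtain \<pi> where \<pi>: "nonanticipative T \<pi>"
    and cost: "\<forall>ws\<in>(\<Pi>\<^sub>E i\<in>{1..T}. Supp M (W i)). path_cost f L K T x0 \<pi> ws p < \<infinity>"
  proof (rule Phi_less_infty_imp_policy[OF assms(1-3) _ assms(5)])
    show "finite (Supp M (W t))" if "t \<in> {1..T}" for t
      using assms(4) that unfolding finite_support_def by blast
  qed
  have "(\<Pi>\<^sub>E i\<in>{1..T}. Supp M (W i)) \<noteq> {}"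
    using prob_space.Supp_nonempty[OF assms(1)] assms(4) by (auto simp: PiE_eq_empty_iff)
  then obtain ws where "ws \<in> (\<Pi>\<^sub>E i\<in>{1..T}. Supp M (W i))"
    by blast
  then have "Vfun M W f L K T t (traj f x0 \<pi> ws t) p < \<infinity>"
    using Vfun_less_infty_along_policy[OF \<pi> cost] assms(6) by blast
  then show ?thesis
    unfolding edom2_def by blast
qed

locale smoothed_dp =
  fixes M :: "'a measure" and W :: "nat \<Rightarrow> 'a \<Rightarrow> 'w"
    and f :: "nat \<Rightarrow> 'x::euclidean_space \<Rightarrow> 'u::euclidean_space \<Rightarrow> 'w \<Rightarrow> 'x"
    and L :: "nat \<Rightarrow> 'x \<Rightarrow> 'u \<Rightarrow> 'w \<Rightarrow> 'p::euclidean_space \<Rightarrow> ereal"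
    and K :: "'x \<Rightarrow> 'p \<Rightarrow> ereal" and T :: nat and \<mu> :: real and PP :: "'p set"
  assumes mu_pos: "0 < \<mu>"
    and finite_support: "\<And>t. t \<in> {1..T} \<Longrightarrow> finite_support M (W t)"
    and Supp_nonempty: "\<And>t. t \<in> {1..T} \<Longrightarrow> Supp M (W t) \<noteq> {}"
    and affine_f: "\<And>t w. t < T \<Longrightarrow> \<exists>A c. linear A \<and> (\<forall>x u. f t x u w = A (x, u) + c)"
    and GammaK_L: "\<And>t w. t < T \<Longrightarrow> w \<in> Supp M (W (Suc t)) \<Longrightarrow> GammaK_cl (\<lambda>x u p. L t x u w p)"
    and Gamma_K: "Gamma_cl K"
    and compact_PP: "compact PP"
    and L_dom_PP: "\<And>t w x u p. t < T \<Longrightarrow> w \<in> Supp M (W (Suc t)) \<Longrightarrow> L t x u w p < \<infinity> \<Longrightarrow> p \<in> PP"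
    and K_dom_PP: "\<And>x p. K x p < \<infinity> \<Longrightarrow> p \<in> PP"
begin

abbreviation V :: "nat \<Rightarrow> 'x \<Rightarrow> 'p \<Rightarrow> ereal" where
  "V t \<equiv> Vmu \<mu> M W f L K T t"

lemma Theta_cl_Kmu: "Theta_cl UNIV (Kmu \<mu> K)"
  unfolding Kmu_def using Theta_cl_moreau[OF Gamma_K compact_PP K_dom_PP mu_pos] .

lemma Theta_cl_Lmu:
  assumes "t < T" "w \<in> Supp M (W (Suc t))"
  shows "Theta_cl UNIV (\<lambda>(x, u). Lmu \<mu> L t x u w)"
proof -
  have G: "Gamma_cl (\<lambda>(x, u) p. L t x u w p)"
    using GammaK_L[OF assms] unfolding GammaK_cl_def by blast
  have dom: "p \<in> PP" if "(\<lambda>(x, u) p. L t x u w p) y p < \<infinity>" for y p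
    using that L_dom_PP[OF assms] by (cases y) auto
  have "Theta_cl UNIV (\<lambda>y. moreau \<mu> ((\<lambda>(x, u) p. L t x u w p) y))"
    using Theta_cl_moreau[OF G compact_PP dom mu_pos] .
  then show ?thesis
    by (simp add: Lmu_def case_prod_beta')
qed

lemma dp_stage_Vmu:
  assumes t: "t < T" and V: "Theta_cl UNIV (V (Suc t))"
  obtains KK where "dp_stage M (W (Suc t)) (Lmu \<mu> L t) (f t) (V (Suc t)) KK"
proof -
  obtain w0 where w0: "w0 \<in> Supp M (W (Suc t))"
    using Supp_nonempty[of "Suc t"] t by auto
  obtain KK where KK: "compact KK" "\<And>x u p. L t x u w0 p < \<infinity> \<Longrightarrow> u \<in> KK"
    using GammaK_L[OF t w0] unfolding GammaK_cl_def by blast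
  have "dp_stage M (W (Suc t)) (Lmu \<mu> L t) (f t) (V (Suc t)) KK"
  proof
    show "finite (Supp M (W (Suc t)))"
      using finite_support[of "Suc t"] t unfolding finite_support_def by simp
    show "u \<in> KK" if finite: "\<And>w. w \<in> Supp M (W (Suc t)) \<Longrightarrow> Lmu \<mu> L t x u w p < \<infinity>" for x u p
    proof -
      obtain p' where "L t x u w0 p' < \<infinity>"
        using finite[OF w0] unfolding Lmu_def by (rule moreau_less_infty_imp)
      then show ?thesis
        by (rule KK(2))
    qed
  qed (use t V KK(1) Theta_cl_Lmu affine_f in auto)
  then show ?thesis
    by (rule that)
qed

lemma Theta_cl_V: "t \<le> T \<Longrightarrow> Theta_cl UNIV (V t)"
proof (induction "T - t" arbitrary: t)
  case 0
  then show ?case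
    using Theta_cl_Kmu by (simp add: Vmu_final)
next
  case (Suc k)
  then have t: "t < T" and "Theta_cl UNIV (V (Suc t))"
    by simp_all
  then obtain KK where "dp_stage M (W (Suc t)) (Lmu \<mu> L t) (f t) (V (Suc t)) KK"
    by (rule dp_stage_Vmu)
  then interpret stage: dp_stage M "W (Suc t)" "Lmu \<mu> L t" "f t" "V (Suc t)" KK .
  show ?case
    using stage.Theta_cl_INF by (simp only: Vmu_Suc[OF t])
qed

lemma V_final_gradient:
  assumes "V T x p < \<infinity>"
  shows "(\<lambda>p'. real_of_ereal (Kmu \<mu> K x p')) differentiable (at p)
    \<and> GDERIV (\<lambda>p'. real_of_ereal (V T x p')) p :> grad (\<lambda>p'. real_of_ereal (Kmu \<mu> K x p')) p"
  using assms Theta_cl_UNIV_differentiable[OF Theta_cl_Kmu] GDERIV_grad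
  unfolding Vmu_final by blast

abbreviation Q :: "nat \<Rightarrow> 'x \<Rightarrow> 'u \<Rightarrow> 'p \<Rightarrow> ereal" where
  "Q t x u p \<equiv> Eexp M (W (Suc t)) (\<lambda>w. Lmu \<mu> L t x u w p + V (Suc t) (f t x u w) p)"

lemma V_argmin_gradient:
  assumes t: "t < T" and finite: "V t x p < \<infinity>"
  shows "{u. \<forall>v. Q t x u p \<le> Q t x v p} \<noteq> {}"
    and "\<forall>us\<in>{u. \<forall>v. Q t x u p \<le> Q t x v p}.
          (\<forall>w\<in>Supp M (W (Suc t)).
             (\<lambda>p'. real_of_ereal (Lmu \<mu> L t x us w p')) differentiable (at p)
             \<and> (\<lambda>p'. real_of_ereal (V (Suc t) (f t x us w) p')) differentiable (at p))
          \<and> GDERIV (\<lambda>p'. real_of_ereal (V t x p')) p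
              :> Evec M (W (Suc t)) (\<lambda>w. grad (\<lambda>p'. real_of_ereal (Lmu \<mu> L t x us w p')) p
                                         + grad (\<lambda>p'. real_of_ereal (V (Suc t) (f t x us w) p')) p)"
    (is "\<forall>us\<in>?argmin. ?gradient us")
proof -
  have "Theta_cl UNIV (V (Suc t))"
    using t by (intro Theta_cl_V) simp
  with t obtain KK where "dp_stage M (W (Suc t)) (Lmu \<mu> L t) (f t) (V (Suc t)) KK"
    by (rule dp_stage_Vmu)
  then interpret stage: dp_stage M "W (Suc t)" "Lmu \<mu> L t" "f t" "V (Suc t)" KK .
  have V_eq: "V t = (\<lambda>x p. INF u. Q t x u p)"
    by (rule Vmu_Suc[OF t])
  with finite have "(INF u. Q t x u p) < \<infinity>"
    by simp
  then obtain u where "\<forall>v. Q t x u p \<le> Q t x v p"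
    by (rule stage.argmin_exists)
  then show "{u. \<forall>v. Q t x u p \<le> Q t x v p} \<noteq> {}"
    by blast
  show "\<forall>us\<in>?argmin. ?gradient us"
  proof
    fix us assume "us \<in> ?argmin"
    then have min: "\<forall>v. Q t x us p \<le> Q t x v p"
      by simp
    with finite V_eq have Q_finite: "Q t x us p < \<infinity>"
      by (simp add: stage.INF_eq_argmin)
    then have "\<forall>w\<in>Supp M (W (Suc t)). Lmu \<mu> L t x us w p < \<infinity> \<and> V (Suc t) (f t x us w) p < \<infinity>"
      using stage.stage_cost_less_infty_iff by blast
    then show "?gradient us"
      using stage.GDERIV_INF[OF min Q_finite stage.GDERIV_stage_cost[OF Q_finite]] V_eq
      by (auto intro: stage.cost_differentiable Theta_cl_UNIV_differentiable[OF stage.Theta_cl_V])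
  qed
qed

end

theorem theorem3:
  fixes M :: "'a measure" and W :: "nat \<Rightarrow> 'a \<Rightarrow> 'w::euclidean_space"
    and f :: "nat \<Rightarrow> 'x::euclidean_space \<Rightarrow> 'u::euclidean_space \<Rightarrow> 'w \<Rightarrow> 'x"
    and L :: "nat \<Rightarrow> 'x \<Rightarrow> 'u \<Rightarrow> 'w \<Rightarrow> 'p::euclidean_space \<Rightarrow> ereal"
    and K :: "'x \<Rightarrow> 'p \<Rightarrow> ereal" and x0 :: 'x and Pad :: "'p set"
    and T :: nat and \<mu> :: real
  assumes T_pos: "T \<ge> 1" and mu_pos: "\<mu> > 0"
    and prob: "prob_space M"
    and L_range: "\<forall>t<T. \<forall>x u w p. L t x u w p \<noteq> -\<infinity>"
    and K_range: "\<forall>x p. K x p \<noteq> -\<infinity>"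
    and A1_indep: "prob_space.indep_vars M (\<lambda>_. borel) W {1..T}"
    and A1_fin: "\<forall>t\<in>{1..T}. finite_support M (W t)"
    and A2i: "\<exists>p\<in>Pad. Phi M W f L K T x0 p < \<infinity>"
    and A2ii: "\<forall>t<T. \<forall>w. \<exists>A c. linear A \<and> (\<forall>x u. f t x u w = A (x, u) + c)"
    and A2iii: "\<forall>t<T. \<forall>w\<in>Supp M (W (Suc t)). GammaK_cl (\<lambda>x u p. L t x u w p)"
    and A2iv: "Gamma_cl K"
    and A4: "\<exists>PP. compact PP
               \<and> (\<forall>t<T. \<forall>w\<in>Supp M (W (Suc t)). \<forall>x u. {p. L t x u w p < \<infinity>} \<subseteq> PP)
               \<and> (\<forall>x. {p. K x p < \<infinity>} \<subseteq> PP)"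
  shows
    "(\<forall>t\<le>T. \<forall>x p. Vmu \<mu> M W f L K T t x p \<le> Vfun M W f L K T t x p)
     \<and> (\<forall>t\<le>T. proper2 (Vmu \<mu> M W f L K T t) \<and> Theta_cl UNIV (Vmu \<mu> M W f L K T t))
     \<and> (\<forall>(x, p)\<in>edom2 (Vmu \<mu> M W f L K T T).
          (\<lambda>p'. real_of_ereal (Kmu \<mu> K x p')) differentiable (at p)
          \<and> GDERIV (\<lambda>p'. real_of_ereal (Vmu \<mu> M W f L K T T x p')) p
              :> grad (\<lambda>p'. real_of_ereal (Kmu \<mu> K x p')) p)
     \<and> (\<forall>t<T. \<forall>(x, p)\<in>edom2 (Vmu \<mu> M W f L K T t).
          {u. \<forall>v. Eexp M (W (Suc t))
                    (\<lambda>w. Lmu \<mu> L t x u w p + Vmu \<mu> M W f L K T (Suc t) (f t x u w) p)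
                 \<le> Eexp M (W (Suc t))
                    (\<lambda>w. Lmu \<mu> L t x v w p + Vmu \<mu> M W f L K T (Suc t) (f t x v w) p)} \<noteq> {}
          \<and> (\<forall>us\<in>{u. \<forall>v. Eexp M (W (Suc t))
                    (\<lambda>w. Lmu \<mu> L t x u w p + Vmu \<mu> M W f L K T (Suc t) (f t x u w) p)
                 \<le> Eexp M (W (Suc t))
                    (\<lambda>w. Lmu \<mu> L t x v w p + Vmu \<mu> M W f L K T (Suc t) (f t x v w) p)}.
               (\<forall>w\<in>Supp M (W (Suc t)).
                  (\<lambda>p'. real_of_ereal (Lmu \<mu> L t x us w p')) differentiable (at p)
                  \<and> (\<lambda>p'. real_of_ereal (Vmu \<mu> M W f L K T (Suc t) (f t x us w) p')) differentiable (at p))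
               \<and> GDERIV (\<lambda>p'. real_of_ereal (Vmu \<mu> M W f L K T t x p')) p
                   :> Evec M (W (Suc t))
                        (\<lambda>w. grad (\<lambda>p'. real_of_ereal (Lmu \<mu> L t x us w p')) p
                             + grad (\<lambda>p'. real_of_ereal (Vmu \<mu> M W f L K T (Suc t) (f t x us w) p')) p)))"
proof -
  obtain PP where PP: "compact PP" "\<forall>t<T. \<forall>w\<in>Supp M (W (Suc t)). \<forall>x u. {p. L t x u w p < \<infinity>} \<subseteq> PP"
    "\<forall>x. {p. K x p < \<infinity>} \<subseteq> PP"
    using A4 by blast
  interpret smoothed_dp M W f L K T \<mu> PP
  proof
    show "Supp M (W t) \<noteq> {}" if "t \<in> {1..T}" for t
      using A1_fin that prob_space.Supp_nonempty[OF prob] by blast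
    show "p \<in> PP" if "t < T" "w \<in> Supp M (W (Suc t))" "L t x u w p < \<infinity>" for t w x u p
      using PP(2) that by blast
  qed (use mu_pos A1_fin A2ii A2iii A2iv PP in auto)
  obtain p0 where p0: "Phi M W f L K T x0 p0 < \<infinity>"
    using A2i by blast
  have "edom2 (Vfun M W f L K T t) \<noteq> {}" if "t \<le> T" for t
    by (rule Vfun_dom_nonempty[OF prob A1_indep T_pos A1_fin p0 that])
  then have "edom2 (V t) \<noteq> {}" if "t \<le> T" for t
    using that Vmu_le_Vfun[THEN le_less_trans] unfolding edom2_def by fast
  then have proper: "proper2 (V t) \<and> Theta_cl UNIV (V t)" if "t \<le> T" for t
    using that Theta_cl_V Theta_cl_UNIV_not_MInfty unfolding proper2_def by blast
  show ?thesis
    unfolding edom2_def using Vmu_le_Vfun proper V_final_gradient V_argmin_gradient by auto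
qed

end
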